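(* Let $G$ be a finite group acting linearly and isometrically on $\mathbb{R}^n$. Let $X=t_0+\epsilon$ where $\mathbb{E}(\epsilon)=0$ and $\epsilon$ is sub-Gaussian in the sense that there exist $c>0$, $s>0$ with $$\mathbb{E}\big(\exp\langle\epsilon,m\rangle\big)\le c\exp\Big(\frac{s^2\|m\|^2}{2}\Big)\quad\text{for all } m\in\mathbb{R}^n.$$ If $m\in\mathbb{R}^n$ satisfies $\tilde\rho:=d_Q([m],[t_0])\ge s\sqrt{2\log(c|G|)}$, then $$\tilde\rho^2-\tilde\rho\, s\sqrt{8\log(c|G|)}\le F(m)-\mathbb{E}(\|\epsilon\|^2).$$
   Context: The action is linear and isometric: each $x\mapsto g\cdot x$ is linear with $\|g\cdot x\|=\|x\|$ (Euclidean norm, inner product $\langle\cdot,\cdot\rangle$). $|G|$ is the cardinality of $G$, $d_Q([a],[b])=\min_{g\in G}\|g\cdot a-b\|$ and $F(m)=\mathbb{E}\big(\min_{g\in G}\|g\cdot X-m\|^2\big)$. *)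

theory Defs
  imports "HOL-Probability.Probability" "HOL-Algebra.Group"
begin

definition dQ :: "('g \<Rightarrow> 'v \<Rightarrow> 'v) \<Rightarrow> 'g set \<Rightarrow> 'v::real_normed_vector \<Rightarrow> 'v \<Rightarrow> real" where
  "dQ act Gc a b = Min ((\<lambda>g. norm (act g a - b)) ` Gc)"

definition Ffun :: "'w measure \<Rightarrow> ('g \<Rightarrow> 'v \<Rightarrow> 'v) \<Rightarrow> 'g set \<Rightarrow> ('w \<Rightarrow> 'v) \<Rightarrow> 'v::real_normed_vector \<Rightarrow> real" where
  "Ffun M act Gc X m = (\<integral>\<omega>. Min ((\<lambda>g. (norm (act g (X \<omega>) - m))\<^sup>2) ` Gc) \<partial>M)"

end

theory Submission
  imports Defs
begin

text \<open>
  Write \<open>q\<^sub>g = \<parallel>g t\<^sub>0 - m\<parallel>\<^sup>2\<close> and \<open>w\<^sub>g = g\<^sup>* (g t\<^sub>0 - m)\<close>. Expanding the square gives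
  \<open>min\<^sub>g \<parallel>g (t\<^sub>0 + \<epsilon>) - m\<parallel>\<^sup>2 = \<parallel>\<epsilon>\<parallel>\<^sup>2 + Y\<close> with \<open>Y = min\<^sub>g (q\<^sub>g + 2 \<langle>\<epsilon>, w\<^sub>g\<rangle>)\<close>, where
  \<open>q\<^sub>g \<ge> \<rho>\<^sup>2\<close> and, \<open>g\<close> being an isometry, \<open>\<parallel>w\<^sub>g\<parallel>\<^sup>2 \<le> q\<^sub>g\<close>. For \<open>0 < \<lambda> \<le> 1/(2s\<^sup>2)\<close>, Jensen's
  inequality, the union bound over \<open>G\<close> and the sub-Gaussian bound give
  \<open>exp (-\<lambda> E Y) \<le> c |G| exp (-\<lambda> \<rho>\<^sup>2 (1 - 2\<lambda>s\<^sup>2))\<close>, i.e.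
  \<open>E Y \<ge> \<rho>\<^sup>2 (1 - 2\<lambda>s\<^sup>2) - log (c |G|) / \<lambda>\<close>. The optimal choice
  \<open>\<lambda> = sqrt (log (c |G|)) / (sqrt 2 s \<rho>)\<close> is admissible exactly when
  \<open>\<rho> \<ge> s sqrt (2 log (c |G|))\<close>, and yields the bound.
\<close>

lemma power2_le_exp_add_exp_uminus: "(x::real)\<^sup>2 \<le> 2 * (exp x + exp (- x))"
proof (cases "0 \<le> x")
  case True
  have "1 + x + x\<^sup>2 / 2 \<le> exp x" using exp_lower_Taylor_quadratic[OF True] .
  moreover have "1 + (- x) \<le> exp (- x)" by (rule exp_ge_add_one_self)
  ultimately show ?thesis by argo
next
  case False
  have "1 + (- x) + x\<^sup>2 / 2 \<le> exp (- x)" using exp_lower_Taylor_quadratic[of "- x"] False by simp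
  moreover have "1 + x \<le> exp x" by (rule exp_ge_add_one_self)
  ultimately show ?thesis unfolding power2_eq_square by argo
qed

lemma abs_le_exp_add_exp_uminus: "\<bar>x::real\<bar> \<le> exp x + exp (- x)"
  unfolding abs_le_iff using exp_ge_add_one_self[of x] exp_ge_add_one_self[of "- x"]
    exp_gt_zero[of x] exp_gt_zero[of "- x"]
  by (intro conjI) linarith+

lemma le_of_forall_pos_le_diff_mult:
  fixes a b \<mu> \<delta> :: real
  assumes "0 < \<delta>" and "\<And>t. 0 < t \<Longrightarrow> t \<le> \<delta> \<Longrightarrow> a - t * b \<le> \<mu>"
  shows "a \<le> \<mu>"
proof (rule tendsto_upperbound)
  show "((\<lambda>t. a - t * b) \<longlongrightarrow> a) (at_right 0)"
    by (auto intro!: tendsto_eq_intros)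
  show "\<forall>\<^sub>F t in at_right 0. a - t * b \<le> \<mu>"
    using eventually_at_right_real[OF \<open>0 < \<delta>\<close>] by eventually_elim (use assms(2) in auto)
qed simp

lemma chernoff_optimised_lower_bound:
  fixes \<rho> s L \<mu> :: real
  assumes s: "0 < s" and L: "0 \<le> L" and \<rho>: "0 \<le> \<rho>" and far: "s * sqrt (2 * L) \<le> \<rho>"
    and bound: "\<And>lam. 0 < lam \<Longrightarrow> 2 * lam * s\<^sup>2 \<le> 1 \<Longrightarrow> \<rho>\<^sup>2 * (1 - 2 * lam * s\<^sup>2) - L / lam \<le> \<mu>"
  shows "\<rho>\<^sup>2 - \<rho> * s * sqrt (8 * L) \<le> \<mu>"
proof (cases "L = 0")
  case True
  have "\<rho>\<^sup>2 \<le> \<mu>"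
  proof (rule le_of_forall_pos_le_diff_mult)
    show "0 < 1 / (2 * s\<^sup>2)" using s by simp
    show "\<rho>\<^sup>2 - t * (2 * s\<^sup>2 * \<rho>\<^sup>2) \<le> \<mu>" if "0 < t" "t \<le> 1 / (2 * s\<^sup>2)" for t
      using bound[of t] that s True by (simp add: field_simps)
  qed
  with True show ?thesis by simp
next
  case False
  define r where "r = sqrt L"
  define t where "t = sqrt (2::real)"
  have r: "0 < r" "r * r = L" unfolding r_def using L False by auto
  have t: "0 < t" "t * t = 2" unfolding t_def by auto
  have far': "s * t * r \<le> \<rho>"
    using far unfolding r_def t_def by (simp add: real_sqrt_mult mult.assoc)
  have "0 < s * t * r" using s r t by simp
  with far' have \<rho>_pos: "0 < \<rho>" by linarith
  define lam where "lam = r / (t * s * \<rho>)"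
  have lam_pos: "0 < lam" unfolding lam_def using r t s \<rho>_pos by simp
  have two_lam_s: "2 * lam * s\<^sup>2 = s * t * r / \<rho>"
    unfolding lam_def using t s \<rho>_pos by (simp add: field_simps power2_eq_square)
  then have lam_le: "2 * lam * s\<^sup>2 \<le> 1"
    using far' \<rho>_pos by (simp add: divide_le_eq)
  have L_lam: "L / lam = s * t * r * \<rho>"
    unfolding lam_def using r t s \<rho>_pos by (simp add: field_simps flip: r(2))
  have "sqrt (8 * L) = 2 * t * r"
    using real_sqrt_mult[of 4 "2 * L"] real_sqrt_mult[of 2 L] unfolding r_def t_def by simp
  then have "\<rho>\<^sup>2 - \<rho> * s * sqrt (8 * L) = \<rho>\<^sup>2 * (1 - 2 * lam * s\<^sup>2) - L / lam"
    unfolding two_lam_s L_lam using \<rho>_pos by (simp add: field_simps power2_eq_square)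
  also have "\<dots> \<le> \<mu>" using bound[OF lam_pos lam_le] .
  finally show ?thesis .
qed

lemma norm_adjoint_le_of_isometry:
  fixes f :: "'a::euclidean_space \<Rightarrow> 'b::euclidean_space"
  assumes "linear f" and "\<And>x. norm (f x) = norm x"
  shows "norm (adjoint f y) \<le> norm y"
proof -
  let ?w = "adjoint f y"
  have "norm ?w * norm ?w = f ?w \<bullet> y"
    by (metis adjoint_works[OF assms(1)] power2_eq_square power2_norm_eq_inner)
  also have "\<dots> \<le> norm (f ?w) * norm y"
    by (rule norm_cauchy_schwarz)
  also have "\<dots> = norm ?w * norm y"
    using assms(2) by simp
  finally show ?thesis
    by (cases "?w = 0") auto
qed

lemma norm_isometry_add_diff_power2:
  fixes f :: "'a::euclidean_space \<Rightarrow> 'b::euclidean_space"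
  assumes "linear f" and "\<And>x. norm (f x) = norm x"
  shows "(norm (f (a + e) - b))\<^sup>2 = (norm e)\<^sup>2 + (norm (f a - b))\<^sup>2 + 2 * (e \<bullet> adjoint f (f a - b))"
proof -
  have shift: "f (a + e) - b = f e + (f a - b)"
    using linear_add[OF assms(1)] by simp
  have "(norm (u + v))\<^sup>2 = (norm u)\<^sup>2 + (norm v)\<^sup>2 + 2 * (u \<bullet> v)" for u v :: 'b
    by (simp add: power2_norm_eq_inner inner_add_left inner_add_right inner_commute)
  then have "(norm (f (a + e) - b))\<^sup>2 = (norm (f e))\<^sup>2 + (norm (f a - b))\<^sup>2 + 2 * (f e \<bullet> (f a - b))"
    unfolding shift .
  then show ?thesis
    using adjoint_works[OF assms(1), of e "f a - b"] assms(2) by simp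
qed

lemma Min_norm_translate_power2:
  fixes act :: "'g \<Rightarrow> 'a::euclidean_space \<Rightarrow> 'a"
  assumes "finite C" and "C \<noteq> {}"
    and "\<And>g. g \<in> C \<Longrightarrow> linear (act g)" and "\<And>g x. g \<in> C \<Longrightarrow> norm (act g x) = norm x"
  shows "Min ((\<lambda>g. (norm (act g (t + e) - m))\<^sup>2) ` C)
       = (norm e)\<^sup>2 + Min ((\<lambda>g. (norm (act g t - m))\<^sup>2 + 2 * (e \<bullet> adjoint (act g) (act g t - m))) ` C)"
proof -
  have "(\<lambda>g. (norm (act g (t + e) - m))\<^sup>2) ` C
      = (\<lambda>g. (norm (act g t - m))\<^sup>2 + 2 * (e \<bullet> adjoint (act g) (act g t - m)) + (norm e)\<^sup>2) ` C"
    using assms(3,4) by (intro image_cong) (simp_all add: norm_isometry_add_diff_power2)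
  then show ?thesis
    using Min_add_commute[OF assms(1,2)] by (simp add: add.commute)
qed

lemma dQ_le_norm_act_diff:
  assumes "group G" and "finite (carrier G)" and "act \<one>\<^bsub>G\<^esub> = id"
    and "\<And>g h. g \<in> carrier G \<Longrightarrow> h \<in> carrier G \<Longrightarrow> act (g \<otimes>\<^bsub>G\<^esub> h) = act g \<circ> act h"
    and "\<And>g. g \<in> carrier G \<Longrightarrow> linear (act g)"
    and "\<And>g x. g \<in> carrier G \<Longrightarrow> norm (act g x) = norm x"
    and g: "g \<in> carrier G"
  shows "dQ act (carrier G) a b \<le> norm (act g b - a)"
proof -
  interpret group G by fact
  let ?h = "inv\<^bsub>G\<^esub> g"
  have h: "?h \<in> carrier G" using g by simp
  have "act ?h (act g b) = b"
    using assms(3) assms(4)[OF h g] l_inv[OF g] by (metis comp_apply id_apply)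
  then have "act ?h a - b = act ?h (a - act g b)"
    using linear_diff[OF assms(5)[OF h]] by simp
  then have "norm (act ?h a - b) = norm (act g b - a)"
    using assms(6)[OF h] by (simp add: norm_minus_commute)
  moreover have "dQ act (carrier G) a b \<le> norm (act ?h a - b)"
    unfolding dQ_def using assms(2) h by (intro Min_le) auto
  ultimately show ?thesis by simp
qed

lemma dQ_nonneg: "finite C \<Longrightarrow> C \<noteq> {} \<Longrightarrow> 0 \<le> dQ act C a b"
  unfolding dQ_def by (subst Min_ge_iff) auto

lemma integrable_Min:
  fixes f :: "'i \<Rightarrow> 'a \<Rightarrow> real"
  assumes "finite I" and "I \<noteq> {}" and "\<And>i. i \<in> I \<Longrightarrow> integrable M (f i)"
  shows "integrable M (\<lambda>x. Min ((\<lambda>i. f i x) ` I))"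
  using assms
proof (induction I rule: finite_ne_induct)
  case (insert i I)
  then show ?case by (simp add: integrable_min)
qed simp

lemma (in finite_measure) Ffun_translate_eq:
  fixes act :: "'g \<Rightarrow> 'b::euclidean_space \<Rightarrow> 'b" and eps :: "'a \<Rightarrow> 'b"
  assumes "finite C" and "C \<noteq> {}"
    and "\<And>g. g \<in> C \<Longrightarrow> linear (act g)" and "\<And>g x. g \<in> C \<Longrightarrow> norm (act g x) = norm x"
    and "integrable M (\<lambda>\<omega>. (norm (eps \<omega>))\<^sup>2)" and "\<And>v. integrable M (\<lambda>\<omega>. eps \<omega> \<bullet> v)"
  shows "Ffun M act C (\<lambda>\<omega>. t + eps \<omega>) m = (\<integral>\<omega>. (norm (eps \<omega>))\<^sup>2 \<partial>M)
           + (\<integral>\<omega>. Min ((\<lambda>g. (norm (act g t - m))\<^sup>2 + 2 * (eps \<omega> \<bullet> adjoint (act g) (act g t - m))) ` C) \<partial>M)"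
proof -
  have "integrable M (\<lambda>\<omega>. Min ((\<lambda>g. (norm (act g t - m))\<^sup>2 + 2 * (eps \<omega> \<bullet> adjoint (act g) (act g t - m))) ` C))"
    using assms(1,2) by (rule integrable_Min) (use assms(6) in simp)
  with assms(5) show ?thesis
    unfolding Ffun_def by (simp add: Min_norm_translate_power2[OF assms(1-4)])
qed

lemma (in prob_space) exp_neg_expectation_Min_le:
  fixes f :: "'i \<Rightarrow> 'a \<Rightarrow> real" and B :: real
  assumes I: "finite I" "I \<noteq> {}"
    and f_int: "\<And>i. i \<in> I \<Longrightarrow> integrable M (f i)"
    and exp_int: "\<And>i. i \<in> I \<Longrightarrow> integrable M (\<lambda>x. exp (- lam * f i x))"
    and exp_le: "\<And>i. i \<in> I \<Longrightarrow> expectation (\<lambda>x. exp (- lam * f i x)) \<le> B"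
  shows "exp (- lam * expectation (\<lambda>x. Min ((\<lambda>i. f i x) ` I))) \<le> card I * B"
proof -
  define Y where "Y x = Min ((\<lambda>i. f i x) ` I)" for x
  have Y_int: "integrable M Y"
    unfolding Y_def using I f_int by (rule integrable_Min)
  have exp_Y_le: "exp (- lam * Y x) \<le> (\<Sum>i\<in>I. exp (- lam * f i x))" for x
  proof -
    have "Y x \<in> (\<lambda>i. f i x) ` I"
      unfolding Y_def using I by (intro Min_in) auto
    then obtain i where "i \<in> I" "Y x = f i x" by auto
    then show ?thesis using I by (auto intro: member_le_sum)
  qed
  have sum_int: "integrable M (\<lambda>x. \<Sum>i\<in>I. exp (- lam * f i x))"
    using exp_int by auto
  have exp_Y_int: "integrable M (\<lambda>x. exp (- lam * Y x))"
  proof (rule Bochner_Integration.integrable_bound[OF sum_int])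
    show "(\<lambda>x. exp (- lam * Y x)) \<in> borel_measurable M"
      using borel_measurable_integrable[OF Y_int] by measurable
    show "AE x in M. norm (exp (- lam * Y x)) \<le> norm (\<Sum>i\<in>I. exp (- lam * f i x))"
      using exp_Y_le by (intro AE_I2) (simp add: sum_nonneg)
  qed
  have "exp (- lam * expectation Y) = exp (expectation (\<lambda>x. - lam * Y x))"
    by simp
  also have "\<dots> \<le> expectation (\<lambda>x. exp (- lam * Y x))"
    using Y_int exp_Y_int by (intro jensens_inequality[where I = UNIV and q = exp]) (auto intro: exp_convex)
  also have "\<dots> \<le> expectation (\<lambda>x. \<Sum>i\<in>I. exp (- lam * f i x))"
    using exp_Y_int sum_int exp_Y_le by (rule Bochner_Integration.integral_mono)
  also have "\<dots> = (\<Sum>i\<in>I. expectation (\<lambda>x. exp (- lam * f i x)))"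
    using exp_int by (rule Bochner_Integration.integral_sum)
  also have "\<dots> \<le> card I * B"
    using sum_mono[OF exp_le, of I] by simp
  finally show ?thesis unfolding Y_def .
qed

locale subgaussian_vector = prob_space +
  fixes X :: "'a \<Rightarrow> 'b::euclidean_space" and c s :: real
  assumes borel_measurable_X[measurable]: "X \<in> borel_measurable M"
    and nn_integral_exp_inner_le:
      "\<And>v. (\<integral>\<^sup>+x. ennreal (exp (X x \<bullet> v)) \<partial>M) \<le> ennreal (c * exp (s\<^sup>2 * (norm v)\<^sup>2 / 2))"
begin

lemma one_le_c: "1 \<le> c"
  using nn_integral_exp_inner_le[of 0] by (simp add: emeasure_space_1)

lemma integrable_exp_inner: "integrable M (\<lambda>x. exp (X x \<bullet> v))"
  using nn_integral_exp_inner_le[of v] by (intro integrableI_nonneg) (auto simp: le_less_trans)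

lemma expectation_exp_inner_le: "expectation (\<lambda>x. exp (X x \<bullet> v)) \<le> c * exp (s\<^sup>2 * (norm v)\<^sup>2 / 2)"
proof -
  have "ennreal (expectation (\<lambda>x. exp (X x \<bullet> v))) \<le> ennreal (c * exp (s\<^sup>2 * (norm v)\<^sup>2 / 2))"
    using nn_integral_exp_inner_le[of v] integrable_exp_inner[of v]
    by (subst nn_integral_eq_integral[symmetric]) auto
  then show ?thesis using one_le_c by simp
qed

lemma integrable_inner: "integrable M (\<lambda>x. X x \<bullet> v)"
proof (rule Bochner_Integration.integrable_bound)
  show "integrable M (\<lambda>x. exp (X x \<bullet> v) + exp (X x \<bullet> - v))"
    by (intro Bochner_Integration.integrable_add integrable_exp_inner)
  show "(\<lambda>x. X x \<bullet> v) \<in> borel_measurable M" by measurable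
  show "AE x in M. norm (X x \<bullet> v) \<le> norm (exp (X x \<bullet> v) + exp (X x \<bullet> - v))"
    by (intro AE_I2) (simp add: abs_le_exp_add_exp_uminus add_pos_pos)
qed

lemma integrable_norm_power2: "integrable M (\<lambda>x. (norm (X x))\<^sup>2)"
proof (rule Bochner_Integration.integrable_bound)
  let ?bound = "\<lambda>x. \<Sum>b\<in>Basis. 2 * (exp (X x \<bullet> b) + exp (X x \<bullet> - b))"
  show "integrable M ?bound"
    by (intro Bochner_Integration.integrable_sum Bochner_Integration.integrable_mult_right
        Bochner_Integration.integrable_add integrable_exp_inner)
  show "(\<lambda>x. (norm (X x))\<^sup>2) \<in> borel_measurable M" by measurable
  have "(norm y)\<^sup>2 \<le> (\<Sum>b\<in>Basis. 2 * (exp (y \<bullet> b) + exp (y \<bullet> - b)))" for y :: 'b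
  proof -
    have "(norm y)\<^sup>2 = (\<Sum>b\<in>Basis. (y \<bullet> b)\<^sup>2)"
      unfolding power2_norm_eq_inner by (simp add: euclidean_inner[of y y] power2_eq_square)
    also have "\<dots> \<le> (\<Sum>b\<in>Basis. 2 * (exp (y \<bullet> b) + exp (y \<bullet> - b)))"
      by (intro sum_mono) (metis inner_minus_right power2_le_exp_add_exp_uminus)
    finally show ?thesis .
  qed
  then show "AE x in M. norm ((norm (X x))\<^sup>2) \<le> norm (?bound x)"
    by (intro AE_I2) (simp add: sum_nonneg)
qed

lemma exp_neg_affine_inner_eq:
  "exp (- lam * (q + 2 * (X x \<bullet> w))) = exp (- lam * q) * exp (X x \<bullet> ((- 2 * lam) *\<^sub>R w))"
  by (simp add: mult_exp_exp algebra_simps)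

lemma integrable_exp_neg_affine_inner: "integrable M (\<lambda>x. exp (- lam * (q + 2 * (X x \<bullet> w))))"
  unfolding exp_neg_affine_inner_eq by (intro Bochner_Integration.integrable_mult_right integrable_exp_inner)

lemma expectation_exp_neg_affine_inner_le:
  assumes "0 \<le> lam" and "2 * lam * s\<^sup>2 \<le> 1" and "(norm w)\<^sup>2 \<le> q" and "r\<^sup>2 \<le> q"
  shows "expectation (\<lambda>x. exp (- lam * (q + 2 * (X x \<bullet> w)))) \<le> c * exp (- lam * r\<^sup>2 * (1 - 2 * lam * s\<^sup>2))"
proof -
  have "expectation (\<lambda>x. exp (- lam * (q + 2 * (X x \<bullet> w))))
      = exp (- lam * q) * expectation (\<lambda>x. exp (X x \<bullet> ((- 2 * lam) *\<^sub>R w)))"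
    unfolding exp_neg_affine_inner_eq by simp
  also have "\<dots> \<le> exp (- lam * q) * (c * exp (s\<^sup>2 * (norm ((- 2 * lam) *\<^sub>R w))\<^sup>2 / 2))"
    by (intro mult_left_mono expectation_exp_inner_le) simp
  also have "\<dots> = c * exp (- lam * q + 2 * lam\<^sup>2 * s\<^sup>2 * (norm w)\<^sup>2)"
    by (simp add: mult_exp_exp power_mult_distrib power2_eq_square algebra_simps)
  also have "\<dots> \<le> c * exp (- lam * r\<^sup>2 * (1 - 2 * lam * s\<^sup>2))"
  proof -
    have "2 * lam\<^sup>2 * s\<^sup>2 * (norm w)\<^sup>2 \<le> 2 * lam\<^sup>2 * s\<^sup>2 * q"
      using assms(3) by (intro mult_left_mono) auto
    moreover have "lam * (1 - 2 * lam * s\<^sup>2) * r\<^sup>2 \<le> lam * (1 - 2 * lam * s\<^sup>2) * q"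
      using assms by (intro mult_left_mono) auto
    ultimately show ?thesis
      using one_le_c by (simp add: algebra_simps power2_eq_square)
  qed
  finally show ?thesis .
qed

lemma one_le_c_mult_card: "finite I \<Longrightarrow> I \<noteq> {} \<Longrightarrow> 1 \<le> c * card I"
  using mult_mono[OF one_le_c, of 1 "real (card I)"] one_le_c by (simp add: Suc_le_eq card_gt_0_iff)

lemma expectation_Min_affine_inner_ge:
  fixes q :: "'i \<Rightarrow> real" and w :: "'i \<Rightarrow> 'b"
  assumes I: "finite I" "I \<noteq> {}"
    and w_le: "\<And>i. i \<in> I \<Longrightarrow> (norm (w i))\<^sup>2 \<le> q i" and r_le: "\<And>i. i \<in> I \<Longrightarrow> r\<^sup>2 \<le> q i"
    and lam: "0 < lam" "2 * lam * s\<^sup>2 \<le> 1"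
  shows "r\<^sup>2 * (1 - 2 * lam * s\<^sup>2) - ln (c * card I) / lam
      \<le> expectation (\<lambda>x. Min ((\<lambda>i. q i + 2 * (X x \<bullet> w i)) ` I))"
proof -
  let ?Y = "\<lambda>x. Min ((\<lambda>i. q i + 2 * (X x \<bullet> w i)) ` I)"
  have exp_ln: "exp (ln (c * card I)) = c * card I"
    using one_le_c_mult_card[OF I] by simp
  have term_int: "integrable M (\<lambda>x. q i + 2 * (X x \<bullet> w i))" for i
    using integrable_inner by simp
  have "exp (- lam * expectation ?Y) \<le> card I * (c * exp (- lam * r\<^sup>2 * (1 - 2 * lam * s\<^sup>2)))"
    using I term_int integrable_exp_neg_affine_inner
  proof (rule exp_neg_expectation_Min_le)
    show "expectation (\<lambda>x. exp (- lam * (q i + 2 * (X x \<bullet> w i))))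
        \<le> c * exp (- lam * r\<^sup>2 * (1 - 2 * lam * s\<^sup>2))" if "i \<in> I" for i
      using lam w_le[OF that] r_le[OF that] by (intro expectation_exp_neg_affine_inner_le) auto
  qed
  also have "\<dots> = exp (ln (c * card I) + - lam * r\<^sup>2 * (1 - 2 * lam * s\<^sup>2))"
    unfolding exp_add exp_ln by simp
  finally have "- lam * expectation ?Y \<le> ln (c * card I) + - lam * r\<^sup>2 * (1 - 2 * lam * s\<^sup>2)"
    by (simp only: exp_le_cancel_iff)
  then show ?thesis
    using lam(1) by (simp add: field_simps algebra_simps)
qed

lemma expectation_Min_affine_inner_lower_bound:
  fixes q :: "'i \<Rightarrow> real" and w :: "'i \<Rightarrow> 'b"
  assumes "finite I" "I \<noteq> {}"
    and "\<And>i. i \<in> I \<Longrightarrow> (norm (w i))\<^sup>2 \<le> q i" and "\<And>i. i \<in> I \<Longrightarrow> r\<^sup>2 \<le> q i"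
    and "0 < s" and "0 \<le> r" and "s * sqrt (2 * ln (c * card I)) \<le> r"
  shows "r\<^sup>2 - r * s * sqrt (8 * ln (c * card I)) \<le> expectation (\<lambda>x. Min ((\<lambda>i. q i + 2 * (X x \<bullet> w i)) ` I))"
  using assms one_le_c_mult_card[OF assms(1,2)]
  by (intro chernoff_optimised_lower_bound expectation_Min_affine_inner_ge) auto

end

theorem mainTheorem7:
  fixes G :: "('g, 'b) monoid_scheme"
    and act :: "'g \<Rightarrow> real^'n \<Rightarrow> real^'n"
    and M :: "'w measure"
    and eps :: "'w \<Rightarrow> real^'n"
    and t0 m :: "real^'n"
    and c s :: real
  assumes grp: "group G"
    and fin: "finite (carrier G)"
    and act_one: "act \<one>\<^bsub>G\<^esub> = id"
    and act_mult: "\<And>g h. g \<in> carrier G \<Longrightarrow> h \<in> carrier G \<Longrightarrow> act (g \<otimes>\<^bsub>G\<^esub> h) = act g \<circ> act h"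
    and act_linear: "\<And>g. g \<in> carrier G \<Longrightarrow> linear (act g)"
    and act_isom: "\<And>g x. g \<in> carrier G \<Longrightarrow> norm (act g x) = norm x"
    and P: "prob_space M"
    and eps_meas: "eps \<in> borel_measurable M"
    and eps_int: "integrable M eps"
    and eps_mean: "(\<integral>\<omega>. eps \<omega> \<partial>M) = 0"
    and c_pos: "c > 0" and s_pos: "s > 0"
    and subG: "\<And>v. (\<integral>\<^sup>+\<omega>. ennreal (exp (eps \<omega> \<bullet> v)) \<partial>M)
                     \<le> ennreal (c * exp (s\<^sup>2 * (norm v)\<^sup>2 / 2))"
    and far: "dQ act (carrier G) m t0 \<ge> s * sqrt (2 * ln (c * real (card (carrier G))))"
  shows "(dQ act (carrier G) m t0)\<^sup>2
           - dQ act (carrier G) m t0 * s * sqrt (8 * ln (c * real (card (carrier G))))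
         \<le> Ffun M act (carrier G) (\<lambda>\<omega>. t0 + eps \<omega>) m - (\<integral>\<omega>. (norm (eps \<omega>))\<^sup>2 \<partial>M)"
proof -
  interpret subgaussian_vector M eps c s
    using P eps_meas subG by (simp add: subgaussian_vector_def subgaussian_vector_axioms_def)
  interpret group G by (fact grp)
  define C where "C = carrier G"
  define \<rho> where "\<rho> = dQ act C m t0"
  define q where "q g = (norm (act g t0 - m))\<^sup>2" for g
  define w where "w g = adjoint (act g) (act g t0 - m)" for g
  have C: "finite C" "C \<noteq> {}"
    unfolding C_def using fin one_closed by auto
  have \<rho>_nonneg: "0 \<le> \<rho>"
    unfolding \<rho>_def using C by (rule dQ_nonneg)
  have "\<rho>\<^sup>2 \<le> q g" and "(norm (w g))\<^sup>2 \<le> q g" if "g \<in> C" for g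
    using that \<rho>_nonneg dQ_le_norm_act_diff[OF grp fin act_one act_mult act_linear act_isom]
      norm_adjoint_le_of_isometry[OF act_linear act_isom]
    unfolding C_def \<rho>_def q_def w_def by (auto intro!: power_mono)
  then have "\<rho>\<^sup>2 - \<rho> * s * sqrt (8 * ln (c * card C))
      \<le> expectation (\<lambda>\<omega>. Min ((\<lambda>g. q g + 2 * (eps \<omega> \<bullet> w g)) ` C))"
    using C s_pos \<rho>_nonneg far unfolding \<rho>_def C_def
    by (intro expectation_Min_affine_inner_lower_bound) auto
  moreover have "Ffun M act C (\<lambda>\<omega>. t0 + eps \<omega>) m = expectation (\<lambda>\<omega>. (norm (eps \<omega>))\<^sup>2)
      + expectation (\<lambda>\<omega>. Min ((\<lambda>g. q g + 2 * (eps \<omega> \<bullet> w g)) ` C))"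
    unfolding q_def w_def using C act_linear act_isom integrable_norm_power2 integrable_inner
    unfolding C_def by (rule Ffun_translate_eq)
  ultimately show ?thesis
    unfolding \<rho>_def C_def by simp
qed

end
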